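(* Assume the standing assumptions in the context. Let $S\subseteq S^*$, $i\in[d]\setminus S$, $n\ge2$, and let $\beta\in\mathbb{R}^d$ be deterministic with $\mathrm{supp}(\beta)\subseteq S$ and $\|\beta\|_2\le 2/\sqrt\rho$. Let $(X_j,Y_j)_{j\in[n]}$ be i.i.d. copies of $(x,y)$, $U_j=|X_{j,i}(X_j^\top\beta-Y_j)|$, and $\tilde V_{i,n}=\frac{1}{n(n-1)}\sum_{1\le l<j\le n}(U_j-U_l)^2$. Then $$\mathbb{E}[\tilde V_{i,n}]\le 20\frac{LM^2}{\rho}.$$
   Context: Standing assumptions: $(x,y)$ random with $x\in\mathbb{R}^d$, $y\in\mathbb{R}$; $\mathbb{E}[x]=0$; $y=\langle\beta^*,x\rangle+\epsilon$ with $\mathbb{E}[\epsilon\mid x]=0$; $S^*=\mathrm{supp}(\beta^* )$, $s^*=|S^*|$; $\Sigma$ the covariance of $x$, $\Sigma_F$ its principal submatrix on $F$; there are $0<\rho\le L$ with all eigenvalues of $\Sigma_F$ in $[\rho,L]$ for all $|F|=s^*$; $|y|<1$ and $\|x\|_\infty<M$ almost surely. $X_{j,i}$ is the $i$-th coordinate of $X_j$. *)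

theory Defs
  imports "HOL-Probability.Probability" "Jordan_Normal_Form.Char_Poly"
begin

text \<open>Vectors of R^d are represented as functions nat => real; only coordinates k < d matter.\<close>

definition supp :: "nat \<Rightarrow> (nat \<Rightarrow> real) \<Rightarrow> nat set" where
  "supp d b = {k. k < d \<and> b k \<noteq> 0}"

definition ip :: "nat \<Rightarrow> (nat \<Rightarrow> real) \<Rightarrow> (nat \<Rightarrow> real) \<Rightarrow> real" where
  "ip d b v = (\<Sum>k<d. b k * v k)"

definition norm2 :: "nat \<Rightarrow> (nat \<Rightarrow> real) \<Rightarrow> real" where
  "norm2 d b = sqrt (\<Sum>k<d. (b k)\<^sup>2)"

definition obs_space :: "nat \<Rightarrow> ((nat \<Rightarrow> real) \<times> real) measure" where
  "obs_space d = (PiM {..<d} (\<lambda>_. borel)) \<Otimes>\<^sub>M borel"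

definition sigma_x :: "nat \<Rightarrow> ((nat \<Rightarrow> real) \<times> real) measure \<Rightarrow> ((nat \<Rightarrow> real) \<times> real) measure" where
  "sigma_x d D = vimage_algebra (space D) fst (PiM {..<d} (\<lambda>_. borel))"

text \<open>Covariance matrix of x (x is centred), entries Sigma_{a,b} = E[x_a x_b].\<close>
definition Cov :: "((nat \<Rightarrow> real) \<times> real) measure \<Rightarrow> nat \<Rightarrow> nat \<Rightarrow> real" where
  "Cov D a b = (\<integral>z. fst z a * fst z b \<partial>D)"

definition Cov_sub :: "((nat \<Rightarrow> real) \<times> real) measure \<Rightarrow> nat set \<Rightarrow> real mat" where
  "Cov_sub D F = (let es = sorted_list_of_set F in
     mat (card F) (card F) (\<lambda>(a, b). Cov D (es ! a) (es ! b)))"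

text \<open>U_j for a sample omega (omega j = (X_j, Y_j)).\<close>
definition Ustat :: "nat \<Rightarrow> nat \<Rightarrow> (nat \<Rightarrow> real) \<Rightarrow> (nat \<Rightarrow> (nat \<Rightarrow> real) \<times> real) \<Rightarrow> nat \<Rightarrow> real" where
  "Ustat d i b \<omega> j = \<bar>fst (\<omega> j) i * (ip d b (fst (\<omega> j)) - snd (\<omega> j))\<bar>"

definition Vtilde :: "nat \<Rightarrow> nat \<Rightarrow> nat \<Rightarrow> (nat \<Rightarrow> real) \<Rightarrow> (nat \<Rightarrow> (nat \<Rightarrow> real) \<times> real) \<Rightarrow> real" where
  "Vtilde n d i b \<omega> = 1 / (real n * (real n - 1)) *
     (\<Sum>j<n. \<Sum>l<j. (Ustat d i b \<omega> j - Ustat d i b \<omega> l)\<^sup>2)"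

end

theory Submission
  imports Defs
begin

(* The U_j are i.i.d., so E[(U_j - U_l)^2] <= 4 E[U^2] and hence E[Vtilde] <= 2 E[U^2].
   Since |x_i| < M and |y| < 1, E[U^2] <= M^2 (2 E[<beta,x>^2] + 2), and
   E[<beta,x>^2] = beta^T Sigma_F beta <= L |beta|^2 <= 4 L / rho, where F = supp beta* contains
   supp beta and L bounds the eigenvalues of Sigma_F.  Together with rho <= L this gives
   E[Vtilde] <= 2 M^2 (8 L / rho + 2) <= 20 L M^2 / rho.
   The Rayleigh bound beta^T Sigma_F beta <= L |beta|^2 comes from maximising the quadratic form
   on the (compact) unit sphere: a maximiser is an eigenvector for the maximal value. *)

section \<open>Quadratic forms and eigenvalues\<close>

definition mat_vec :: "nat \<Rightarrow> (nat \<Rightarrow> nat \<Rightarrow> real) \<Rightarrow> (nat \<Rightarrow> real) \<Rightarrow> nat \<Rightarrow> real" where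
  "mat_vec m A v a = (\<Sum>b<m. A a b * v b)"

lemma ip_self_nonneg: "0 \<le> ip m u u"
  unfolding ip_def by (auto intro: sum_nonneg)

lemma ip_self_eq_0_iff: "ip m u u = 0 \<longleftrightarrow> (\<forall>a<m. u a = 0)"
  unfolding ip_def by (subst sum_nonneg_eq_0_iff) auto

lemma square_le_ip_self: "a < m \<Longrightarrow> (u a)\<^sup>2 \<le> ip m u u"
  unfolding ip_def power2_eq_square by (rule member_le_sum) auto

lemma ip_unit_left: "a < m \<Longrightarrow> ip m (\<lambda>k. if k = a then 1 else 0) v = v a"
  unfolding ip_def by (simp add: if_distrib[of "\<lambda>x. x * _"] cong: if_cong)

lemma ip_scale: "ip m (\<lambda>k. c * u k) (\<lambda>k. c * v k) = c\<^sup>2 * ip m u v"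
  unfolding ip_def by (simp add: sum_distrib_left algebra_simps power2_eq_square)

lemma mat_vec_scale: "mat_vec m A (\<lambda>k. c * v k) = (\<lambda>a. c * mat_vec m A v a)"
  unfolding mat_vec_def by (simp add: sum_distrib_left algebra_simps)

lemma ip_add_scaled:
  "ip m (\<lambda>k. v k + t * u k) (\<lambda>k. v k + t * u k) = ip m v v + 2 * t * ip m u v + t\<^sup>2 * ip m u u"
  unfolding ip_def by (simp add: algebra_simps power2_eq_square sum.distrib sum_distrib_left)

lemma ip_mat_vec_commute:
  assumes "\<And>a b. a < m \<Longrightarrow> b < m \<Longrightarrow> A a b = A b a"
  shows "ip m u (mat_vec m A v) = ip m v (mat_vec m A u)"
  unfolding ip_def mat_vec_def sum_distrib_left
  by (subst sum.swap) (auto intro!: sum.cong simp: assms mult.commute mult.left_commute)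

lemma quadratic_form_add_scaled:
  assumes "\<And>a b. a < m \<Longrightarrow> b < m \<Longrightarrow> A a b = A b a"
  shows "ip m (\<lambda>k. v k + t * u k) (mat_vec m A (\<lambda>k. v k + t * u k)) =
    ip m v (mat_vec m A v) + 2 * t * ip m u (mat_vec m A v) + t\<^sup>2 * ip m u (mat_vec m A u)"
proof -
  have "ip m (\<lambda>k. v k + t * u k) (mat_vec m A (\<lambda>k. v k + t * u k)) =
    ip m v (mat_vec m A v) + t * ip m u (mat_vec m A v) + t * ip m v (mat_vec m A u)
      + t\<^sup>2 * ip m u (mat_vec m A u)"
    unfolding ip_def mat_vec_def
    by (simp add: algebra_simps power2_eq_square sum.distrib sum_distrib_left)
  then show ?thesis
    using ip_mat_vec_commute[OF assms, where u = v and v = u] by simp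
qed

lemma linear_coeff_eq_0_if_quadratic_nonpos:
  fixes c e :: real
  assumes "\<And>t. 2 * t * c + t\<^sup>2 * e \<le> 0"
  shows "c = 0"
proof -
  define t where "t = c / (\<bar>e\<bar> + 1)"
  have c: "c = t * (\<bar>e\<bar> + 1)"
    unfolding t_def by (simp add: add_pos_nonneg)
  have "t\<^sup>2 * (2 * (\<bar>e\<bar> + 1) + e) = 2 * t * c + t\<^sup>2 * e"
    unfolding c by (simp add: algebra_simps power2_eq_square)
  also have "\<dots> \<le> 0"
    by (rule assms)
  finally have "t\<^sup>2 * (2 * (\<bar>e\<bar> + 1) + e) \<le> 0" .
  moreover have "0 < 2 * (\<bar>e\<bar> + 1) + e"
    by (cases "0 \<le> e") auto
  ultimately have "t\<^sup>2 \<le> 0"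
    by (simp add: mult_le_0_iff)
  then show ?thesis
    using c by simp
qed

lemma quadratic_form_attains_max_ratio:
  assumes "0 < m"
  obtains v0 where "ip m v0 v0 = 1"
    and "\<And>u. ip m u (mat_vec m A u) \<le> ip m v0 (mat_vec m A v0) * ip m u u"
proof -
  let ?q = "\<lambda>v. ip m v (mat_vec m A v)"
  \<comment> \<open>Pinning the coordinates beyond m to 0 makes the unit sphere compact in nat \<Rightarrow> real.\<close>
  define B where "B = (\<lambda>k::nat. if k < m then {-1..1::real} else {0})"
  define K where "K = Pi UNIV B \<inter> {v. ip m v v = 1}"
  have "compactin (product_topology (\<lambda>_. euclidean) UNIV) (PiE UNIV B)"
    by (subst compactin_PiE) (auto simp: B_def)
  then have "compact (Pi UNIV B)"
    by (simp add: euclidean_product_topology PiE_UNIV_domain)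
  moreover have "continuous_on UNIV (\<lambda>v::nat \<Rightarrow> real. ip m v v)"
    unfolding ip_def
    by (intro continuous_intros continuous_on_product_then_coordinatewise continuous_on_id)
  then have "closed {v::nat \<Rightarrow> real. ip m v v = 1}"
    by (intro closed_Collect_eq) (auto intro: continuous_intros)
  ultimately have "compact K"
    unfolding K_def using compact_Int_closed by blast
  moreover have "(\<lambda>k. if k = 0 then 1 else 0) \<in> K"
    using assms ip_unit_left[of 0 m] by (auto simp: K_def B_def)
  then have "K \<noteq> {}"
    by blast
  moreover have "continuous_on K ?q"
    unfolding ip_def mat_vec_def
    by (intro continuous_intros continuous_on_product_then_coordinatewise continuous_on_id)
  ultimately obtain v0 where v0: "v0 \<in> K" and v0_max: "\<And>v. v \<in> K \<Longrightarrow> ?q v \<le> ?q v0"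
    using continuous_attains_sup[of K ?q] by blast
  have "?q u \<le> ?q v0 * ip m u u" for u
  proof (cases "ip m u u = 0")
    case True
    then have "\<forall>a<m. u a = 0"
      by (simp add: ip_self_eq_0_iff)
    then have "?q u = 0"
      by (simp add: ip_def)
    then show ?thesis
      using True by simp
  next
    case False
    then have pos: "0 < ip m u u"
      using ip_self_nonneg[of m u] by simp
    define c where "c = 1 / sqrt (ip m u u)"
    define u' where "u' = (\<lambda>k. if k < m then c * u k else 0)"
    have u': "ip m u' w = ip m (\<lambda>k. c * u k) w" "mat_vec m A u' = mat_vec m A (\<lambda>k. c * u k)" for w
      unfolding ip_def mat_vec_def u'_def by simp_all
    have c2: "c\<^sup>2 = 1 / ip m u u"
      using pos by (simp add: c_def power_divide)
    have "ip m u' u' = ip m (\<lambda>k. c * u k) (\<lambda>k. c * u k)"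
      unfolding ip_def u'_def by simp
    then have norm_u': "ip m u' u' = 1"
      using pos by (simp add: ip_scale c2)
    have "u' \<in> K"
    proof -
      have "\<bar>u' k\<bar> \<le> 1" if "k < m" for k
        using square_le_ip_self[OF that, of u'] norm_u' by (simp add: abs_square_le_1)
      then show ?thesis
        using norm_u' by (auto simp: K_def B_def u'_def abs_le_iff)
    qed
    then have "?q u' \<le> ?q v0"
      by (rule v0_max)
    moreover have "?q u' = ?q u / ip m u u"
      by (simp add: u' mat_vec_scale ip_scale c2)
    ultimately show ?thesis
      using pos by (simp add: divide_le_eq)
  qed
  moreover have "ip m v0 v0 = 1"
    using v0 by (simp add: K_def)
  ultimately show thesis
    using that by blast
qed

lemma quadratic_form_maximiser_is_eigenvector:
  assumes sym: "\<And>a b. a < m \<Longrightarrow> b < m \<Longrightarrow> A a b = A b a"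
    and le: "\<And>u. ip m u (mat_vec m A u) \<le> lam * ip m u u"
    and eq: "ip m v (mat_vec m A v) = lam * ip m v v"
    and a: "a < m"
  shows "mat_vec m A v a = lam * v a"
proof -
  define e where "e = (\<lambda>k. if k = a then 1 else 0 :: real)"
  have "2 * t * (ip m e (mat_vec m A v) - lam * ip m e v)
      + t\<^sup>2 * (ip m e (mat_vec m A e) - lam * ip m e e) \<le> 0" for t
  proof -
    have "ip m (\<lambda>k. v k + t * e k) (mat_vec m A (\<lambda>k. v k + t * e k))
        \<le> lam * ip m (\<lambda>k. v k + t * e k) (\<lambda>k. v k + t * e k)"
      by (rule le)
    then show ?thesis
      using eq by (simp add: quadratic_form_add_scaled[OF sym] ip_add_scaled algebra_simps)
  qed
  then have "ip m e (mat_vec m A v) - lam * ip m e v = 0"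
    by (rule linear_coeff_eq_0_if_quadratic_nonpos)
  then show ?thesis
    using a by (simp add: e_def ip_unit_left)
qed

lemma ip_mat_vec_le_eigenvalue_bound:
  assumes sym: "\<And>a b. a < m \<Longrightarrow> b < m \<Longrightarrow> A a b = A b a"
    and ev: "\<And>lam v. \<exists>k<m. v k \<noteq> 0 \<Longrightarrow> \<forall>a<m. mat_vec m A v a = lam * v a \<Longrightarrow> lam \<le> L"
  shows "ip m w (mat_vec m A w) \<le> L * ip m w w"
proof (cases "m = 0")
  case True
  then show ?thesis
    by (simp add: ip_def)
next
  case False
  then obtain v0 where norm_v0: "ip m v0 v0 = 1"
    and v0_max: "\<And>u. ip m u (mat_vec m A u) \<le> ip m v0 (mat_vec m A v0) * ip m u u"
    by (metis quadratic_form_attains_max_ratio not_gr_zero)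
  define lam where "lam = ip m v0 (mat_vec m A v0)"
  have "\<forall>a<m. mat_vec m A v0 a = lam * v0 a"
    using quadratic_form_maximiser_is_eigenvector[OF sym, where lam = lam] v0_max norm_v0
    by (simp add: lam_def mult.commute)
  moreover have "\<exists>k<m. v0 k \<noteq> 0"
    using norm_v0 ip_self_eq_0_iff[of m v0] by auto
  ultimately have "lam \<le> L"
    using ev by blast
  then show ?thesis
    using v0_max[of w] ip_self_nonneg[of m w] unfolding lam_def[symmetric]
    by (meson mult_right_mono order_trans)
qed

lemma eigenvalue_mat_of_fun:
  assumes nz: "\<exists>k<m. v k \<noteq> 0" and eq: "\<forall>a<m. mat_vec m A v a = lam * v a"
  shows "eigenvalue (mat m m (\<lambda>(a, b). A a b)) lam"
  unfolding eigenvalue_def eigenvector_def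
proof (intro exI conjI)
  show "vec m v \<in> carrier_vec (dim_row (mat m m (\<lambda>(a, b). A a b)))"
    by simp
  show "vec m v \<noteq> 0\<^sub>v (dim_row (mat m m (\<lambda>(a, b). A a b)))"
    using nz by (auto simp: vec_eq_iff)
  show "mat m m (\<lambda>(a, b). A a b) *\<^sub>v vec m v = lam \<cdot>\<^sub>v vec m v"
  proof (rule eq_vecI)
    fix a
    assume "a < dim_vec (lam \<cdot>\<^sub>v vec m v)"
    then show "(mat m m (\<lambda>(a, b). A a b) *\<^sub>v vec m v) $ a = (lam \<cdot>\<^sub>v vec m v) $ a"
      using eq by (simp add: scalar_prod_def atLeast0LessThan row_def mat_vec_def)
  qed simp
qed

lemma sum_lessThan_eq_sum_sorted_list_of_set:
  fixes f :: "nat \<Rightarrow> 'a::comm_monoid_add"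
  assumes F: "F \<subseteq> {..<d}" and f0: "\<And>a. a < d \<Longrightarrow> a \<notin> F \<Longrightarrow> f a = 0"
  shows "(\<Sum>a<d. f a) = (\<Sum>p<card F. f (sorted_list_of_set F ! p))"
proof -
  have "finite F"
    using F finite_subset by blast
  then have "bij_betw ((!) (sorted_list_of_set F)) {..<card F} F"
    by (intro bij_betw_nth) auto
  then have "(\<Sum>a\<in>F. f a) = (\<Sum>p<card F. f (sorted_list_of_set F ! p))"
    by (simp add: sum.reindex_bij_betw)
  moreover have "(\<Sum>a<d. f a) = (\<Sum>a\<in>F. f a)"
    by (rule sum.mono_neutral_right) (use F f0 in auto)
  ultimately show ?thesis
    by simp
qed

lemma Cov_quadratic_form_le:
  assumes F: "F \<subseteq> {..<d}"
    and ev: "\<And>lam. eigenvalue (Cov_sub D F) lam \<Longrightarrow> lam \<le> L"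
    and b0: "\<And>k. k < d \<Longrightarrow> k \<notin> F \<Longrightarrow> b k = 0"
  shows "ip d b (mat_vec d (Cov D) b) \<le> L * ip d b b"
proof -
  define es where "es = sorted_list_of_set F"
  define C where "C = (\<lambda>p q. Cov D (es ! p) (es ! q))"
  define w where "w = (\<lambda>p. b (es ! p))"
  note reindex = sum_lessThan_eq_sum_sorted_list_of_set[OF F, folded es_def]
  have "ip d b (mat_vec d (Cov D) b) = ip (card F) w (mat_vec (card F) C w)"
    unfolding ip_def mat_vec_def C_def w_def
    by (subst reindex) (auto simp: b0 intro!: sum.cong arg_cong2[where f = "(*)"] reindex)
  moreover have "ip d b b = ip (card F) w w"
    unfolding ip_def w_def by (rule reindex) (simp add: b0)
  moreover have "ip (card F) w (mat_vec (card F) C w) \<le> L * ip (card F) w w"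
  proof (rule ip_mat_vec_le_eigenvalue_bound)
    show "C p q = C q p" for p q
      by (simp add: C_def Cov_def mult.commute)
    have "Cov_sub D F = mat (card F) (card F) (\<lambda>(p, q). C p q)"
      by (simp add: Cov_sub_def Let_def C_def es_def)
    then show "lam \<le> L" if "\<exists>k<card F. v k \<noteq> 0" "\<forall>a<card F. mat_vec (card F) C v a = lam * v a"
      for lam v
      using ev eigenvalue_mat_of_fun[OF that] by simp
  qed
  ultimately show ?thesis
    by simp
qed

lemma integral_ip_square:
  assumes "\<And>a c. a < d \<Longrightarrow> c < d \<Longrightarrow> integrable D (\<lambda>z. fst z a * fst z c)"
  shows "(\<integral>z. (ip d b (fst z))\<^sup>2 \<partial>D) = ip d b (mat_vec d (Cov D) b)"
proof -
  have "(\<integral>z. (ip d b (fst z))\<^sup>2 \<partial>D) = (\<integral>z. (\<Sum>a<d. \<Sum>c<d. b a * b c * (fst z a * fst z c)) \<partial>D)"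
    unfolding ip_def power2_eq_square by (simp add: sum_product algebra_simps)
  also have "\<dots> = (\<Sum>a<d. \<integral>z. (\<Sum>c<d. b a * b c * (fst z a * fst z c)) \<partial>D)"
    using assms by (intro Bochner_Integration.integral_sum integrable_sum) auto
  also have "\<dots> = (\<Sum>a<d. \<Sum>c<d. b a * b c * Cov D a c)"
    unfolding Cov_def using assms by (intro sum.cong refl, subst Bochner_Integration.integral_sum) auto
  also have "\<dots> = ip d b (mat_vec d (Cov D) b)"
    unfolding ip_def mat_vec_def by (simp add: sum_distrib_left algebra_simps)
  finally show ?thesis .
qed

lemma norm2_square: "(norm2 d b)\<^sup>2 = ip d b b"
  unfolding norm2_def ip_def by (simp add: sum_nonneg power2_eq_square)

lemma ip_self_le_of_norm2_le: "norm2 d b \<le> r \<Longrightarrow> ip d b b \<le> r\<^sup>2"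
  unfolding norm2_square[symmetric] by (intro power_mono) (simp_all add: norm2_def sum_nonneg)

section \<open>Pairwise differences of i.i.d. samples\<close>

lemma square_diff_le: "(a - b)\<^sup>2 \<le> 2 * a\<^sup>2 + 2 * (b::real)\<^sup>2"
  using zero_le_power2[of "a + b"] by (simp add: power2_eq_square algebra_simps)

lemma
  fixes h :: "'a \<Rightarrow> real"
  assumes D: "prob_space D" and h: "h \<in> borel_measurable D" and j: "j \<in> I"
  shows integrable_PiM_component_iff: "integrable (PiM I (\<lambda>_. D)) (\<lambda>\<omega>. h (\<omega> j)) \<longleftrightarrow> integrable D h"
    and integral_PiM_component: "(\<integral>\<omega>. h (\<omega> j) \<partial>PiM I (\<lambda>_. D)) = integral\<^sup>L D h"
proof -
  have distr: "distr (PiM I (\<lambda>_. D)) D (\<lambda>\<omega>. \<omega> j) = D"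
    using distr_PiM_component[of I "\<lambda>_. D" j] D j by simp
  have "(\<lambda>\<omega>. \<omega> j) \<in> measurable (PiM I (\<lambda>_. D)) D"
    using measurable_component_singleton[OF j, of "\<lambda>_. D"] by simp
  from integrable_distr_eq[OF this h] integral_distr[OF this h]
  show "integrable (PiM I (\<lambda>_. D)) (\<lambda>\<omega>. h (\<omega> j)) \<longleftrightarrow> integrable D h"
    and "(\<integral>\<omega>. h (\<omega> j) \<partial>PiM I (\<lambda>_. D)) = integral\<^sup>L D h"
    by (simp_all add: distr)
qed

lemma integral_pairwise_square_diff_le:
  fixes g :: "'a \<Rightarrow> real"
  assumes D: "prob_space D" and g: "g \<in> borel_measurable D" and g2: "integrable D (\<lambda>z. (g z)\<^sup>2)"
  shows "(\<integral>\<omega>. (\<Sum>j<n. \<Sum>l<j. (g (\<omega> j) - g (\<omega> l))\<^sup>2) \<partial>PiM {..<n} (\<lambda>_. D))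
    \<le> 2 * (real n * (real n - 1)) * (\<integral>z. (g z)\<^sup>2 \<partial>D)"
proof -
  define P where "P = PiM {..<n} (\<lambda>_. D)"
  define E where "E = (\<integral>z. (g z)\<^sup>2 \<partial>D)"
  have g2_meas: "(\<lambda>z. (g z)\<^sup>2) \<in> borel_measurable D"
    using g by simp
  have comp: "integrable P (\<lambda>\<omega>. (g (\<omega> j))\<^sup>2)" "(\<integral>\<omega>. (g (\<omega> j))\<^sup>2 \<partial>P) = E" if "j < n" for j
    using integrable_PiM_component_iff[OF D g2_meas, where j = j and I = "{..<n}"]
      integral_PiM_component[OF D g2_meas, where j = j and I = "{..<n}"] g2 that
    by (simp_all add: P_def E_def)
  have diff: "integrable P (\<lambda>\<omega>. (g (\<omega> j) - g (\<omega> l))\<^sup>2)"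
    and diff_le: "(\<integral>\<omega>. (g (\<omega> j) - g (\<omega> l))\<^sup>2 \<partial>P) \<le> 4 * E" if "j < n" "l < n" for j l
  proof -
    have g_comp: "(\<lambda>\<omega>. g (\<omega> k)) \<in> borel_measurable P" if "k < n" for k
      unfolding P_def using measurable_compose[OF measurable_component_singleton[of k "{..<n}" "\<lambda>_. D"] g] that
      by simp
    have bound: "integrable P (\<lambda>\<omega>. 2 * (g (\<omega> j))\<^sup>2 + 2 * (g (\<omega> l))\<^sup>2)"
      using comp that by simp
    then show diff: "integrable P (\<lambda>\<omega>. (g (\<omega> j) - g (\<omega> l))\<^sup>2)"
      by (rule Bochner_Integration.integrable_bound)
         (use g_comp that square_diff_le in \<open>auto intro!: AE_I2\<close>)
    have "(\<integral>\<omega>. (g (\<omega> j) - g (\<omega> l))\<^sup>2 \<partial>P) \<le> (\<integral>\<omega>. 2 * (g (\<omega> j))\<^sup>2 + 2 * (g (\<omega> l))\<^sup>2 \<partial>P)"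
      using diff bound square_diff_le by (intro integral_mono) auto
    also have "\<dots> = 4 * E"
      using comp that by simp
    finally show "(\<integral>\<omega>. (g (\<omega> j) - g (\<omega> l))\<^sup>2 \<partial>P) \<le> 4 * E" .
  qed
  have "(\<integral>\<omega>. (\<Sum>j<n. \<Sum>l<j. (g (\<omega> j) - g (\<omega> l))\<^sup>2) \<partial>P)
      = (\<Sum>j<n. \<Sum>l<j. \<integral>\<omega>. (g (\<omega> j) - g (\<omega> l))\<^sup>2 \<partial>P)"
    using diff by (subst Bochner_Integration.integral_sum, force intro!: integrable_sum,
      intro sum.cong refl Bochner_Integration.integral_sum) auto
  also have "\<dots> \<le> (\<Sum>j<n. \<Sum>l<j. 4 * E)"
    using diff_le by (intro sum_mono) auto
  also have "\<dots> = 4 * E * (\<Sum>j<n. real j)"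
    by (subst sum_distrib_left) (simp add: mult.commute)
  also have "(\<Sum>j<n. real j) = real n * (real n - 1) / 2"
    by (induction n) (auto simp: field_simps)
  finally show ?thesis
    by (simp add: P_def E_def)
qed

section \<open>Bounded observations\<close>

definition Uobs :: "nat \<Rightarrow> nat \<Rightarrow> (nat \<Rightarrow> real) \<Rightarrow> (nat \<Rightarrow> real) \<times> real \<Rightarrow> real" where
  "Uobs d i b z = \<bar>fst z i * (ip d b (fst z) - snd z)\<bar>"

lemma Vtilde_eq:
  "Vtilde n d i b \<omega> =
    1 / (real n * (real n - 1)) * (\<Sum>j<n. \<Sum>l<j. (Uobs d i b (\<omega> j) - Uobs d i b (\<omega> l))\<^sup>2)"
  by (simp add: Vtilde_def Ustat_def Uobs_def)

locale bounded_observation = prob_space D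
  for D :: "((nat \<Rightarrow> real) \<times> real) measure" and d :: nat and M :: real +
  assumes sets_obs: "sets D = sets (obs_space d)"
    and covariates_bounded: "AE z in D. \<forall>k<d. \<bar>fst z k\<bar> < M"
    and response_bounded: "AE z in D. \<bar>snd z\<bar> < 1"
begin

lemma measurable_covariate: "k < d \<Longrightarrow> (\<lambda>z. fst z k) \<in> borel_measurable D"
proof -
  have "fst \<in> measurable D (PiM {..<d} (\<lambda>_. borel))"
    unfolding measurable_cong_sets[OF sets_obs refl] obs_space_def by (rule measurable_fst)
  moreover assume "k < d"
  ultimately show ?thesis
    by (auto intro: measurable_compose[OF _ measurable_component_singleton])
qed

lemma measurable_response: "snd \<in> borel_measurable D"
  unfolding measurable_cong_sets[OF sets_obs refl] obs_space_def by (rule measurable_snd)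

lemma measurable_ip: "(\<lambda>z. ip d b (fst z)) \<in> borel_measurable D"
  unfolding ip_def by (intro borel_measurable_sum borel_measurable_times measurable_covariate) auto

lemma AE_abs_covariate_le: "k < d \<Longrightarrow> AE z in D. \<bar>fst z k\<bar> \<le> M"
  using covariates_bounded by eventually_elim auto

lemma AE_abs_ip_le: "AE z in D. \<bar>ip d b (fst z)\<bar> \<le> (\<Sum>k<d. \<bar>b k\<bar>) * M"
  using covariates_bounded
proof eventually_elim
  case (elim z)
  have "\<bar>ip d b (fst z)\<bar> \<le> (\<Sum>k<d. \<bar>b k\<bar> * \<bar>fst z k\<bar>)"
    unfolding ip_def abs_mult[symmetric] by (rule sum_abs)
  also have "\<dots> \<le> (\<Sum>k<d. \<bar>b k\<bar> * M)"
    using elim by (intro sum_mono mult_left_mono) auto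
  finally show ?case
    by (simp add: sum_distrib_right)
qed

lemma integrable_covariate_prod:
  assumes "a < d" "c < d"
  shows "integrable D (\<lambda>z. fst z a * fst z c)"
proof (rule integrable_const_bound[where B = "M * M"])
  show "AE z in D. norm (fst z a * fst z c) \<le> M * M"
    using AE_abs_covariate_le[OF assms(1)] AE_abs_covariate_le[OF assms(2)]
    by eventually_elim (simp add: abs_mult mult_mono')
qed (use assms measurable_covariate in auto)

lemma integral_ip_square_le:
  assumes "F \<subseteq> {..<d}" and "\<And>lam. eigenvalue (Cov_sub D F) lam \<Longrightarrow> lam \<le> L"
    and "\<And>k. k < d \<Longrightarrow> k \<notin> F \<Longrightarrow> b k = 0"
  shows "(\<integral>z. (ip d b (fst z))\<^sup>2 \<partial>D) \<le> L * ip d b b"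
  using Cov_quadratic_form_le[OF assms] by (simp add: integral_ip_square integrable_covariate_prod)

lemma integrable_ip_square: "integrable D (\<lambda>z. (ip d b (fst z))\<^sup>2)"
proof (rule integrable_const_bound[where B = "((\<Sum>k<d. \<bar>b k\<bar>) * M)\<^sup>2"])
  show "AE z in D. norm ((ip d b (fst z))\<^sup>2) \<le> ((\<Sum>k<d. \<bar>b k\<bar>) * M)\<^sup>2"
    using AE_abs_ip_le[of b]
  proof eventually_elim
    case (elim z)
    then have "\<bar>ip d b (fst z)\<bar>\<^sup>2 \<le> ((\<Sum>k<d. \<bar>b k\<bar>) * M)\<^sup>2"
      by (intro power_mono) auto
    then show ?case
      by simp
  qed
qed (use measurable_ip in auto)

lemma AE_response_square_le_1: "AE z in D. (snd z)\<^sup>2 \<le> 1"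
  using response_bounded by eventually_elim (simp add: abs_square_le_1)

lemma integrable_response_square: "integrable D (\<lambda>z. (snd z)\<^sup>2)"
  by (rule integrable_const_bound[where B = 1])
     (use AE_response_square_le_1 measurable_response in auto)

lemma integral_response_square_le: "(\<integral>z. (snd z)\<^sup>2 \<partial>D) \<le> 1"
proof -
  have "(\<integral>z. (snd z)\<^sup>2 \<partial>D) \<le> (\<integral>z. 1 \<partial>D)"
    using AE_response_square_le_1 integrable_response_square by (intro integral_mono_AE) auto
  then show ?thesis
    by (simp add: prob_space)
qed

lemma measurable_Uobs: "i < d \<Longrightarrow> Uobs d i b \<in> borel_measurable D"
  unfolding Uobs_def
  by (intro borel_measurable_abs borel_measurable_times borel_measurable_diff measurable_covariate
      measurable_ip measurable_response)

lemma AE_Uobs_square_le: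
  assumes "i < d"
  shows "AE z in D. (Uobs d i b z)\<^sup>2 \<le> M\<^sup>2 * (2 * (ip d b (fst z))\<^sup>2 + 2 * (snd z)\<^sup>2)"
  using AE_abs_covariate_le[OF assms]
proof eventually_elim
  case (elim z)
  then have "\<bar>fst z i\<bar>\<^sup>2 \<le> M\<^sup>2"
    by (intro power_mono) auto
  then have "(fst z i)\<^sup>2 * (ip d b (fst z) - snd z)\<^sup>2 \<le> M\<^sup>2 * (2 * (ip d b (fst z))\<^sup>2 + 2 * (snd z)\<^sup>2)"
    using square_diff_le by (intro mult_mono) auto
  then show ?case
    by (simp add: Uobs_def power_mult_distrib)
qed

lemma integrable_Uobs_square: "i < d \<Longrightarrow> integrable D (\<lambda>z. (Uobs d i b z)\<^sup>2)"
  by (rule Bochner_Integration.integrable_bound[where f = "\<lambda>z. M\<^sup>2 * (2 * (ip d b (fst z))\<^sup>2 + 2 * (snd z)\<^sup>2)"])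
     (use integrable_ip_square integrable_response_square measurable_Uobs AE_Uobs_square_le
       in \<open>auto elim!: AE_mp\<close>)

lemma integral_Uobs_square_le:
  assumes "i < d"
  shows "(\<integral>z. (Uobs d i b z)\<^sup>2 \<partial>D) \<le> M\<^sup>2 * (2 * (\<integral>z. (ip d b (fst z))\<^sup>2 \<partial>D) + 2)"
proof -
  have "(\<integral>z. (Uobs d i b z)\<^sup>2 \<partial>D) \<le> (\<integral>z. M\<^sup>2 * (2 * (ip d b (fst z))\<^sup>2 + 2 * (snd z)\<^sup>2) \<partial>D)"
    using assms integrable_Uobs_square integrable_ip_square integrable_response_square AE_Uobs_square_le
    by (intro integral_mono_AE) auto
  also have "\<dots> = M\<^sup>2 * (2 * (\<integral>z. (ip d b (fst z))\<^sup>2 \<partial>D) + 2 * (\<integral>z. (snd z)\<^sup>2 \<partial>D))"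
    using integrable_ip_square integrable_response_square by simp
  also have "\<dots> \<le> M\<^sup>2 * (2 * (\<integral>z. (ip d b (fst z))\<^sup>2 \<partial>D) + 2)"
    using integral_response_square_le by (intro mult_left_mono) auto
  finally show ?thesis .
qed

lemma integral_Vtilde_le:
  assumes "i < d"
  shows "(\<integral>\<omega>. Vtilde n d i b \<omega> \<partial>PiM {..<n} (\<lambda>_. D)) \<le> 2 * (\<integral>z. (Uobs d i b z)\<^sup>2 \<partial>D)"
proof -
  define N where "N = real n * (real n - 1)"
  have "0 \<le> N"
    unfolding N_def by (cases n) auto
  have "(\<integral>\<omega>. Vtilde n d i b \<omega> \<partial>PiM {..<n} (\<lambda>_. D))
      = 1 / N * (\<integral>\<omega>. (\<Sum>j<n. \<Sum>l<j. (Uobs d i b (\<omega> j) - Uobs d i b (\<omega> l))\<^sup>2) \<partial>PiM {..<n} (\<lambda>_. D))"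
    by (simp add: Vtilde_eq N_def)
  also have "\<dots> \<le> 1 / N * (2 * N * (\<integral>z. (Uobs d i b z)\<^sup>2 \<partial>D))"
    using integral_pairwise_square_diff_le[OF prob_space_axioms measurable_Uobs[OF assms, of b]
        integrable_Uobs_square[OF assms, of b], where n = n, folded N_def] \<open>0 \<le> N\<close>
    by (intro mult_left_mono) auto
  also have "\<dots> \<le> 2 * (\<integral>z. (Uobs d i b z)\<^sup>2 \<partial>D)"
    by (cases "N = 0") auto
  finally show ?thesis .
qed

end

theorem mainTheorem6:
  fixes D :: "((nat \<Rightarrow> real) \<times> real) measure"
    and d n i :: nat and \<beta>s \<beta> :: "nat \<Rightarrow> real" and \<rho> L M :: real and S :: "nat set"
  assumes prob: "prob_space D"
    and sets_D: "sets D = sets (obs_space d)"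
    and mean_zero: "\<forall>k<d. (\<integral>z. fst z k \<partial>D) = 0"
    and noise: "AE z in D. real_cond_exp D (sigma_x d D) (\<lambda>z. snd z - ip d \<beta>s (fst z)) z = 0"
    and rho_pos: "0 < \<rho>" and rho_L: "\<rho> \<le> L"
    and eig: "\<forall>F. F \<subseteq> {..<d} \<and> card F = card (supp d \<beta>s) \<longrightarrow>
               (\<forall>k. eigenvalue (Cov_sub D F) k \<longrightarrow> \<rho> \<le> k \<and> k \<le> L)"
    and y_bd: "AE z in D. \<bar>snd z\<bar> < 1"
    and x_bd: "AE z in D. \<forall>k<d. \<bar>fst z k\<bar> < M"
    and S_sub: "S \<subseteq> supp d \<beta>s"
    and i_d: "i < d" and i_S: "i \<notin> S"
    and n2: "n \<ge> 2"
    and supp_beta: "supp d \<beta> \<subseteq> S"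
    and beta_norm: "norm2 d \<beta> \<le> 2 / sqrt \<rho>"
  shows "(\<integral>\<omega>. Vtilde n d i \<beta> \<omega> \<partial>(PiM {..<n} (\<lambda>_. D))) \<le> 20 * L * M\<^sup>2 / \<rho>"
proof -
  interpret bounded_observation D d M
    using prob sets_D x_bd y_bd by (simp add: bounded_observation_def bounded_observation_axioms_def)
  define F where "F = supp d \<beta>s"
  have F_d: "F \<subseteq> {..<d}" and beta_0: "\<And>k. k < d \<Longrightarrow> k \<notin> F \<Longrightarrow> \<beta> k = 0"
    using supp_beta S_sub by (auto simp: F_def supp_def)
  have "ip d \<beta> \<beta> \<le> 4 / \<rho>"
    using ip_self_le_of_norm2_le[OF beta_norm] rho_pos by (simp add: power_divide)
  moreover have "(\<integral>z. (ip d \<beta> (fst z))\<^sup>2 \<partial>D) \<le> L * ip d \<beta> \<beta>"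
    using eig F_d beta_0 by (intro integral_ip_square_le) (auto simp: F_def)
  ultimately have E_ip: "(\<integral>z. (ip d \<beta> (fst z))\<^sup>2 \<partial>D) \<le> L * (4 / \<rho>)"
    using rho_pos rho_L by (smt (verit) mult_left_mono)
  have "(\<integral>\<omega>. Vtilde n d i \<beta> \<omega> \<partial>(PiM {..<n} (\<lambda>_. D))) \<le> 2 * (\<integral>z. (Uobs d i \<beta> z)\<^sup>2 \<partial>D)"
    by (rule integral_Vtilde_le[OF i_d])
  also have "\<dots> \<le> 2 * (M\<^sup>2 * (2 * (\<integral>z. (ip d \<beta> (fst z))\<^sup>2 \<partial>D) + 2))"
    using integral_Uobs_square_le[OF i_d] by simp
  also have "\<dots> \<le> 2 * (M\<^sup>2 * (2 * (L * (4 / \<rho>)) + 2))"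
    using E_ip by (intro mult_left_mono add_right_mono) auto
  also have "\<dots> \<le> 20 * L * M\<^sup>2 / \<rho>"
    using mult_right_mono[OF rho_L, of "M\<^sup>2"] rho_pos by (simp add: field_simps)
  finally show ?thesis .
qed

end
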